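(* Let $K$ be an arbitrary field, let $V_1,\dots,V_m$ and $V$ be $K$-vector spaces, and let $f\colon \prod_{i=1}^m V_i\to V$ be a multilinear map (linear in each argument separately). If $\operatorname{Im} f$ contains two vectors that are not proportional, then $\operatorname{Im} f$ contains a $2$-dimensional linear subspace of $V$. In particular, if $\dim V=2$ then $\operatorname{Im} f=V$. *)

theory Defs
  imports Complex_Main "HOL-Library.FuncSet"
begin

definition multilinear_on ::
  "('k::field \<Rightarrow> 'b::ab_group_add \<Rightarrow> 'b) \<Rightarrow> ('k \<Rightarrow> 'c::ab_group_add \<Rightarrow> 'c) \<Rightarrow> nat \<Rightarrow>
   (nat \<Rightarrow> 'b set) \<Rightarrow> ((nat \<Rightarrow> 'b) \<Rightarrow> 'c) \<Rightarrow> bool" where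
  "multilinear_on sV sW m S f \<longleftrightarrow>
     (\<forall>i<m. \<forall>x\<in>PiE {..<m} S. \<forall>u\<in>S i. \<forall>v\<in>S i. \<forall>c.
        f (x(i := u + v)) = f (x(i := u)) + f (x(i := v)) \<and>
        f (x(i := sV c u)) = sW c (f (x(i := u))))"

end

theory Submission
  imports Defs
begin

text \<open>Suppose that along every coordinate line t \<mapsto> z(i := t) the values of f are
  pairwise proportional. Then all values of f are: pass from x to y by changing one
  coordinate at a time; proportionality is transitive through nonzero vectors, and
  when both intermediate values f (x(n := b)) and f (y(n := a)) vanish, replacing
  the n-th coordinate of x and y by a + b changes neither f x nor f y. Hence some
  coordinate line carries two non-proportional values p, q, and since f is linear
  along it, every combination of p and q is a value of f.\<close>

definition proportional :: "('k \<Rightarrow> 'b \<Rightarrow> 'b) \<Rightarrow> 'b \<Rightarrow> 'b \<Rightarrow> bool" where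
  "proportional scale u v \<longleftrightarrow> (\<exists>c. u = scale c v) \<or> (\<exists>c. v = scale c u)"

context vector_space
begin

lemma proportional_refl: "proportional scale u u"
  unfolding proportional_def by (metis scale_one)

lemma proportional_sym: "proportional scale u v \<Longrightarrow> proportional scale v u"
  unfolding proportional_def by blast

lemma proportional_trans:
  assumes "v \<noteq> 0" and "proportional scale u v" and "proportional scale v w"
  shows "proportional scale u w"
proof -
  have multiple: "\<exists>c. x = c *s v" if xv: "proportional scale x v" for x
  proof (cases "\<exists>c. x = c *s v")
    case False
    then obtain c where c: "v = c *s x" using xv unfolding proportional_def by blast
    with assms(1) have "c \<noteq> 0" by auto
    with c have "x = inverse c *s v" by simp
    then show ?thesis by blast
  qed
  obtain s t where s: "u = s *s v" and t: "w = t *s v"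
    using multiple assms(2,3) proportional_sym by blast
  show ?thesis
  proof (cases "t = 0")
    case True
    with t have "w = 0 *s u" by simp
    then show ?thesis unfolding proportional_def by blast
  next
    case False
    with s t have "u = (s * inverse t) *s w" by simp
    then show ?thesis unfolding proportional_def by blast
  qed
qed

lemma independent_pair_if_not_proportional:
  assumes "\<not> proportional scale p q"
  shows "independent {p, q}" and "p \<noteq> q"
  using assms proportional_refl
  by (auto simp: proportional_def independent_insert span_singleton)

lemma span_pair: "span {p, q} = {a *s p + b *s q | a b. True}"
  by (auto simp: span_insert span_singleton) (metis add.commute diff_eq_eq, metis add_diff_cancel_left')

text \<open>The hypothesis B \<noteq> {} excludes the junk case dim UNIV = 0, which also
  occurs for infinite-dimensional spaces.\<close>
lemma span_eq_UNIV_if_card_eq_dim: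
  assumes "independent B" "finite B" "B \<noteq> {}" "card B = dim (UNIV :: 'b set)"
  shows "span B = UNIV"
proof (rule ccontr)
  assume "span B \<noteq> UNIV"
  then obtain w where w: "w \<notin> span B" by blast
  obtain C where C: "independent C" "UNIV \<subseteq> span C" "card C = dim (UNIV :: 'b set)"
    using basis_exists[of UNIV] by metis
  have "finite C" using C(3) assms(2-4) card.infinite by fastforce
  with C(2) have "card (insert w B) \<le> card C"
    using independent_span_bound independent_insertI[OF w assms(1)] by blast
  moreover have "w \<notin> B" using w span_base by blast
  ultimately show False using C(3) assms(2,4) by simp
qed

end

lemma PiE_lessThan_upd:
  "x \<in> PiE {..<m} S \<Longrightarrow> i < m \<Longrightarrow> a \<in> S i \<Longrightarrow> x(i := a) \<in> PiE {..<m} S"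
  by (auto simp: PiE_iff extensional_def)

lemma multilinear_onD:
  assumes "multilinear_on sV sW m S f" "i < m" "x \<in> PiE {..<m} S" "u \<in> S i" "v \<in> S i"
  shows "f (x(i := u + v)) = f (x(i := u)) + f (x(i := v))"
    and "f (x(i := sV c u)) = sW c (f (x(i := u)))"
  using assms unfolding multilinear_on_def by blast+

lemma multilinear_on_span_slice_subset_image:
  assumes VS: "vector_space sV" and WS: "vector_space sW"
    and sub: "\<forall>i<m. module.subspace sV (S i)"
    and ml: "multilinear_on sV sW m S f"
    and z: "z \<in> PiE {..<m} S" and i: "i < m" and a: "a \<in> S i" and b: "b \<in> S i"
  shows "module.span sW {f (z(i := a)), f (z(i := b))} \<subseteq> f ` PiE {..<m} S"
proof
  interpret V: vector_space sV by (rule VS)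
  interpret W: vector_space sW by (rule WS)
  fix w assume "w \<in> W.span {f (z(i := a)), f (z(i := b))}"
  then obtain k t where w: "w = sW k (f (z(i := a))) + sW t (f (z(i := b)))"
    by (auto simp: W.span_pair)
  have ka: "sV k a \<in> S i" and tb: "sV t b \<in> S i"
    using sub i a b V.subspace_scale by blast+
  have "f (z(i := sV k a + sV t b)) = w"
    using multilinear_onD[OF ml i z ka tb] multilinear_onD[OF ml i z a a]
      multilinear_onD[OF ml i z b b] w by simp
  moreover have "z(i := sV k a + sV t b) \<in> PiE {..<m} S"
    using PiE_lessThan_upd[OF z i] V.subspace_add sub i ka tb by blast
  ultimately show "w \<in> f ` PiE {..<m} S" by blast
qed

lemma agree_from_upd: "\<forall>j\<ge>Suc n. x j = y j \<Longrightarrow> \<forall>j\<ge>n. (x(n := c)) j = (y(n := c)) j"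
  by (metis Suc_le_eq fun_upd_apply le_eq_less_or_eq)

lemma multilinear_on_proportional_if_slices_proportional:
  assumes VS: "vector_space sV" and WS: "vector_space sW"
    and sub: "\<forall>i<m. module.subspace sV (S i)"
    and ml: "multilinear_on sV sW m S f"
    and slices: "\<forall>z\<in>PiE {..<m} S. \<forall>i<m. \<forall>a\<in>S i. \<forall>b\<in>S i.
       proportional sW (f (z(i := a))) (f (z(i := b)))"
  shows "x \<in> PiE {..<m} S \<Longrightarrow> y \<in> PiE {..<m} S \<Longrightarrow> \<forall>j\<ge>n. x j = y j \<Longrightarrow>
     proportional sW (f x) (f y)"
proof (induction n arbitrary: x y)
  interpret W: vector_space sW by (rule WS)
  case 0
  then show ?case by (simp add: W.proportional_refl fun_eq_iff)
next
  interpret V: vector_space sV by (rule VS)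
  interpret W: vector_space sW by (rule WS)
  case (Suc n)
  note x = Suc.prems(1) and y = Suc.prems(2) and agree = agree_from_upd[OF Suc.prems(3)]
  show ?case
  proof (cases "n < m")
    case False
    with x y have "x n = y n" by (simp add: PiE_def extensional_def)
    with agree[of "x n"] have "\<forall>j\<ge>n. x j = y j" by (metis fun_upd_triv)
    then show ?thesis using Suc.IH x y by blast
  next
    case n: True
    define a b where "a = x n" and "b = y n"
    have a: "a \<in> S n" and b: "b \<in> S n" using x y n by (auto simp: a_def b_def PiE_iff)
    have xa: "x(n := a) = x" and yb: "y(n := b) = y" by (simp_all add: a_def b_def)
    let ?x' = "x(n := b)" and ?y' = "y(n := a)"
    have x': "?x' \<in> PiE {..<m} S" and y': "?y' \<in> PiE {..<m} S"
      using PiE_lessThan_upd[OF x n b] PiE_lessThan_upd[OF y n a] .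
    have xy': "proportional sW (f x) (f ?y')" using Suc.IH[OF x y' agree[of a, unfolded xa]] .
    have y'y: "proportional sW (f ?y') (f y)"
      using slices[rule_format, OF y n a b] yb by simp
    have x'y: "proportional sW (f ?x') (f y)" using Suc.IH[OF x' y agree[of b, unfolded yb]] .
    have xx': "proportional sW (f x) (f ?x')" using slices[rule_format, OF x n a b] xa by simp
    consider "f ?y' \<noteq> 0" | "f ?x' \<noteq> 0" | "f ?x' = 0" "f ?y' = 0" by blast
    then show ?thesis
    proof cases
      case 1
      then show ?thesis using W.proportional_trans xy' y'y by blast
    next
      case 2
      then show ?thesis using W.proportional_trans xx' x'y by blast
    next
      case 3
      have ab: "a + b \<in> S n" using sub n a b V.subspace_add by blast
      have "f (x(n := a + b)) = f x" "f (y(n := a + b)) = f y"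
        using multilinear_onD(1)[OF ml n x a b] multilinear_onD(1)[OF ml n y a b] 3 xa yb
        by simp_all
      then show ?thesis
        using Suc.IH[OF PiE_lessThan_upd[OF x n ab] PiE_lessThan_upd[OF y n ab] agree] by metis
    qed
  qed
qed

theorem lemma1p31:
  fixes sV :: "'k::field \<Rightarrow> 'b::ab_group_add \<Rightarrow> 'b"
    and sW :: "'k \<Rightarrow> 'c::ab_group_add \<Rightarrow> 'c"
    and m :: nat
    and S :: "nat \<Rightarrow> 'b set"
    and f :: "(nat \<Rightarrow> 'b) \<Rightarrow> 'c"
  assumes VS: "vector_space sV" and WS: "vector_space sW"
    and sub: "\<forall>i<m. module.subspace sV (S i)"
    and ml: "multilinear_on sV sW m S f"
    and np: "\<exists>u\<in>f ` PiE {..<m} S. \<exists>v\<in>f ` PiE {..<m} S.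
               (\<nexists>c. u = sW c v) \<and> (\<nexists>c. v = sW c u)"
  shows "(\<exists>W. module.subspace sW W \<and> vector_space.dim sW W = 2 \<and> W \<subseteq> f ` PiE {..<m} S)
         \<and> (vector_space.dim sW (UNIV :: 'c set) = 2 \<longrightarrow> f ` PiE {..<m} S = UNIV)"
proof -
  interpret W: vector_space sW by (rule WS)
  from np obtain x y where x: "x \<in> PiE {..<m} S" and y: "y \<in> PiE {..<m} S"
    and xy: "\<not> proportional sW (f x) (f y)"
    by (auto simp: proportional_def)
  have "\<forall>j\<ge>m. x j = y j" using x y by (auto simp: PiE_def extensional_def)
  with x y xy obtain z i a b where z: "z \<in> PiE {..<m} S" and i: "i < m" and ab: "a \<in> S i" "b \<in> S i"
    and pq: "\<not> proportional sW (f (z(i := a))) (f (z(i := b)))"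
    using multilinear_on_proportional_if_slices_proportional[OF VS WS sub ml, of x y m] by blast
  let ?P = "W.span {f (z(i := a)), f (z(i := b))}"
  have image: "?P \<subseteq> f ` PiE {..<m} S"
    using multilinear_on_span_slice_subset_image[OF VS WS sub ml z i ab] .
  have dim: "W.dim ?P = 2"
    using W.dim_span_eq_card_independent W.independent_pair_if_not_proportional[OF pq] by simp
  have "?P = UNIV" if "W.dim (UNIV :: 'c set) = 2"
    using W.span_eq_UNIV_if_card_eq_dim W.independent_pair_if_not_proportional[OF pq] that
    by simp
  with image dim show ?thesis using W.subspace_span by blast
qed

end
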